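(* Let $\mathcal H$ be a real Hilbert space. Let $\Psi: \mathcal H \to \mathbb R \cup \{+\infty\}$ be proper, lower-semicontinuous and convex, and let $\Phi: \mathcal H \to \mathbb R$ be convex and continuously differentiable with $L$-Lipschitz continuous gradient; set $\Theta=\Psi+\Phi$ and suppose $\operatorname{argmin}\Theta\neq\emptyset$. Let $\alpha>3$ and $0<s<\frac1L$, and let $(x_k)$ be generated by: given arbitrary $x_0,x_1\in\mathcal H$, for $k\ge1$, $$y_k = x_k + \frac{k-1}{k+\alpha-1}(x_k-x_{k-1}),\qquad x_{k+1} = \operatorname{prox}_{s\Psi}\big(y_k - s\nabla\Phi(y_k)\big).$$ Let $x^*\in\operatorname{argmin}\Theta$. Then the limit $$\lim_{k\to\infty}\Big[k^2\|x_{k+1}-x_k\|^2 + (k+1)^2\big(\Theta(x_{k+1})-\Theta(x^* )\big)\Big]$$ exists.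
   Context: $\operatorname{prox}_{s\Psi}(z) = \operatorname{argmin}_{u\in\mathcal H}\{\Psi(u) + \frac{1}{2s}\|u-z\|^2\}$ denotes the proximal operator. *)

theory Defs
  imports "HOL-Analysis.Analysis" "HOL-Library.Extended_Real"
begin

definition proper_fun :: "('a \<Rightarrow> ereal) \<Rightarrow> bool" where
  "proper_fun f \<longleftrightarrow> (\<forall>x. f x \<noteq> -\<infinity>) \<and> (\<exists>x. f x \<noteq> \<infinity>)"

definition lsc_fun :: "('a::topological_space \<Rightarrow> ereal) \<Rightarrow> bool" where
  "lsc_fun f \<longleftrightarrow> (\<forall>x. \<forall>c < f x. eventually (\<lambda>y. c < f y) (at x))"

definition convex_ereal_fun :: "('a::real_vector \<Rightarrow> ereal) \<Rightarrow> bool" where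
  "convex_ereal_fun f \<longleftrightarrow>
     (\<forall>x y. \<forall>t\<in>{0..1::real}.
        f ((1 - t) *\<^sub>R x + t *\<^sub>R y) \<le> ereal (1 - t) * f x + ereal t * f y)"

definition is_prox :: "real \<Rightarrow> ('a::real_normed_vector \<Rightarrow> ereal) \<Rightarrow> 'a \<Rightarrow> 'a \<Rightarrow> bool" where
  "is_prox s \<Psi> z u \<longleftrightarrow>
     (\<forall>v. \<Psi> u + ereal (norm (u - z) ^ 2 / (2 * s)) \<le> \<Psi> v + ereal (norm (v - z) ^ 2 / (2 * s)))"

end

theory Submission
  imports Defs
begin

text \<open>The proximal gradient inequality
  \<Theta>(u) \<le> \<Theta>(v) + \<langle>y - u, u - v\<rangle>/s + \<parallel>y - u\<parallel>^2/(2s)  for  u = prox_{s\<Psi>}(y - s \<nabla>\<Phi>(y)),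
  used with v = x_k and v = x*, gives two estimates.  With t_k = (k + \<alpha> - 2)/(\<alpha> - 1), the energy
  E_k = t_k^2 (\<Theta>(x_k) - \<Theta>(x*)) + \<parallel>(t_k - 1)(x_k - x_{k-1}) + x_k - x*\<parallel>^2/(2s)
  decreases by at least (\<alpha> - 3)/(\<alpha> - 1)^2 k (\<Theta>(x_k) - \<Theta>(x*)), and
  W_k = \<Theta>(x_k) - \<Theta>(x*) + \<parallel>x_k - x_{k-1}\<parallel>^2/(2s) is nonincreasing.  A weighted sum of the two
  estimates telescopes, so \<Sum> k W_k < \<infinity> (this is where \<alpha> > 3 enters), and a nonincreasing sequence
  with \<Sum> k W_k < \<infinity> satisfies k^2 W_k \<rightarrow> 0.  Hence the limit exists and is 0.\<close>

section \<open>Smooth convex functions\<close>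

lemma convex_on_gradient_ineq:
  fixes f :: "'a::real_inner \<Rightarrow> real"
  assumes convex: "convex_on UNIV f"
    and deriv: "\<And>z. (f has_derivative (\<lambda>h. g z \<bullet> h)) (at z)"
  shows "f y + g y \<bullet> (v - y) \<le> f v"
proof -
  define l where "l t = f (y + t *\<^sub>R (v - y))" for t :: real
  have "convex_on UNIV l"
  proof (rule convex_onI)
    fix a b t :: real
    assume t: "0 < t" "t < 1"
    have "y + ((1 - t) * a + t * b) *\<^sub>R (v - y)
        = (1 - t) *\<^sub>R (y + a *\<^sub>R (v - y)) + t *\<^sub>R (y + b *\<^sub>R (v - y))"
      by (simp add: algebra_simps)
    then show "l ((1 - t) *\<^sub>R a + t *\<^sub>R b) \<le> (1 - t) * l a + t * l b"
      using convex t unfolding l_def convex_on_def by simp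
  qed simp
  moreover have "(l has_field_derivative (g y \<bullet> (v - y))) (at 0)"
  proof -
    have "((\<lambda>t. y + t *\<^sub>R (v - y)) has_derivative (\<lambda>t. t *\<^sub>R (v - y))) (at 0)"
      by (auto intro!: derivative_eq_intros)
    from has_derivative_compose[OF this deriv] show ?thesis
      by (simp add: l_def[abs_def] o_def has_field_derivative_def mult_commute_abs)
  qed
  ultimately show ?thesis
    using convex_on_imp_above_tangent[of UNIV l 0 1 "g y \<bullet> (v - y)"] by (simp add: l_def)
qed

lemma lipschitz_gradient_increment:
  fixes g :: "'a::real_inner \<Rightarrow> 'a"
  assumes "\<And>u v. norm (g u - g v) \<le> L * norm (u - v)"
  shows "(g (y + h) - g y) \<bullet> h \<le> L * (norm h)^2"
proof -
  have "(g (y + h) - g y) \<bullet> h \<le> norm (g (y + h) - g y) * norm h"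
    by (rule norm_cauchy_schwarz)
  also have "\<dots> \<le> L * norm h * norm h"
    using assms[of "y + h" y] by (simp add: mult_right_mono)
  finally show ?thesis by (simp add: power2_eq_square mult.assoc)
qed

text \<open>Halving h and applying the estimate twice improves the constant from
  L/2 + L/2^(n+1) to L/2 + L/2^(n+2); this replaces integrating the gradient along the segment.\<close>
lemma descent_lemma_approx:
  fixes f :: "'a::real_inner \<Rightarrow> real"
  assumes convex: "convex_on UNIV f"
    and deriv: "\<And>z. (f has_derivative (\<lambda>h. g z \<bullet> h)) (at z)"
    and lipschitz: "\<And>u v. norm (g u - g v) \<le> L * norm (u - v)"
  shows "f (y + h) \<le> f y + g y \<bullet> h + (L/2 + L/2 ^ Suc n) * (norm h)^2"
proof (induction n arbitrary: y h)
  case 0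
  have "f (y + h) + g (y + h) \<bullet> (y - (y + h)) \<le> f y"
    by (rule convex_on_gradient_ineq[OF convex deriv])
  with lipschitz_gradient_increment[OF lipschitz, of y h] show ?case
    by (simp add: inner_diff_left inner_diff_right)
next
  case (Suc n)
  define c where "c = L/2 + L/2 ^ Suc n"
  define h' where "h' = (1/2 :: real) *\<^sub>R h"
  have "h = h' + h'" by (simp add: h'_def scaleR_2[symmetric])
  moreover have "f (y + h') \<le> f y + g y \<bullet> h' + c * (norm h')^2"
    and "f ((y + h') + h') \<le> f (y + h') + g (y + h') \<bullet> h' + c * (norm h')^2"
    using Suc unfolding c_def by blast+
  ultimately have "f (y + h) \<le> f y + g y \<bullet> h + (2 * c + L) * (norm h')^2"
    using lipschitz_gradient_increment[OF lipschitz, of y h']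
    by (simp add: inner_diff_left inner_add_right algebra_simps)
  also have "(2 * c + L) * (norm h')^2 = (L/2 + L/2 ^ Suc (Suc n)) * (norm h)^2"
    by (simp add: c_def h'_def power2_eq_square field_simps)
  finally show ?case .
qed

lemma descent_lemma:
  fixes f :: "'a::real_inner \<Rightarrow> real"
  assumes "convex_on UNIV f"
    and "\<And>z. (f has_derivative (\<lambda>h. g z \<bullet> h)) (at z)"
    and "\<And>u v. norm (g u - g v) \<le> L * norm (u - v)"
  shows "f (y + h) \<le> f y + g y \<bullet> h + L/2 * (norm h)^2"
proof (rule LIMSEQ_le_const)
  have "(\<lambda>n. L/2 ^ Suc n) \<longlonglongrightarrow> 0"
    using LIMSEQ_Suc[OF LIMSEQ_divide_realpow_zero[of 2 L]] by simp
  then have "(\<lambda>n. f y + g y \<bullet> h + (L/2 + L/2 ^ Suc n) * (norm h)^2)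
      \<longlonglongrightarrow> f y + g y \<bullet> h + (L/2 + 0) * (norm h)^2"
    by (intro tendsto_intros)
  then show "(\<lambda>n. f y + g y \<bullet> h + (L/2 + L/2 ^ Suc n) * (norm h)^2)
      \<longlonglongrightarrow> f y + g y \<bullet> h + L/2 * (norm h)^2"
    by simp
  show "\<exists>N. \<forall>n\<ge>N. f (y + h) \<le> f y + g y \<bullet> h + (L/2 + L/2 ^ Suc n) * (norm h)^2"
    using descent_lemma_approx[OF assms] by blast
qed

section \<open>Proximal gradient steps\<close>

lemma is_prox_finite:
  assumes proper: "proper_fun \<Psi>" and prox: "is_prox s \<Psi> z u"
  shows "\<Psi> u \<noteq> \<infinity>"
proof
  assume "\<Psi> u = \<infinity>"
  moreover obtain v where "\<Psi> v \<noteq> \<infinity>" and "\<Psi> v \<noteq> -\<infinity>"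
    using proper unfolding proper_fun_def by auto
  ultimately show False
    using prox[unfolded is_prox_def, rule_format, of v] by auto
qed

lemma nonpos_if_le_small_multiples:
  fixes a c :: real
  assumes "\<And>t. 0 < t \<Longrightarrow> t \<le> 1 \<Longrightarrow> a \<le> t * c"
  shows "a \<le> 0"
proof (rule field_le_epsilon)
  fix e :: real assume "0 < e"
  show "a \<le> 0 + e"
  proof (cases "c \<le> 0")
    case True
    then show ?thesis using assms[of 1] \<open>0 < e\<close> by simp
  next
    case False
    define t where "t = min 1 (e / c)"
    have "a \<le> t * c" using assms False \<open>0 < e\<close> by (simp add: t_def)
    also have "\<dots> \<le> e / c * c" using False by (intro mult_right_mono) (auto simp: t_def)
    finally show ?thesis using False by simp
  qed
qed

text \<open>Compare u with the points (1 - t) u + t v of the segment towards v and let t tend to 0.\<close>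
lemma is_prox_variational_ineq:
  fixes \<Psi> :: "'a::real_inner \<Rightarrow> ereal"
  assumes proper: "proper_fun \<Psi>" and convex: "convex_ereal_fun \<Psi>" and "0 < s"
    and prox: "is_prox s \<Psi> z u" and v: "\<Psi> v \<noteq> \<infinity>"
  shows "real_of_ereal (\<Psi> u) \<le> real_of_ereal (\<Psi> v) + ((u - z) \<bullet> (v - u)) / s"
proof -
  have not_minf: "\<Psi> w \<noteq> -\<infinity>" for w using proper unfolding proper_fun_def by auto
  obtain pu where pu: "\<Psi> u = ereal pu"
    using is_prox_finite[OF proper prox] not_minf[of u] by (cases "\<Psi> u") auto
  obtain pv where pv: "\<Psi> v = ereal pv" using v not_minf[of v] by (cases "\<Psi> v") auto
  define ip where "ip = (u - z) \<bullet> (v - u)"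
  define N where "N = (norm (v - u))^2"
  have "pu - pv - ip / s \<le> t * (N / (2 * s))" if t: "0 < t" "t \<le> 1" for t
  proof -
    define w where "w = (1 - t) *\<^sub>R u + t *\<^sub>R v"
    have "\<Psi> w \<le> ereal (1 - t) * \<Psi> u + ereal t * \<Psi> v"
      using convex t unfolding convex_ereal_fun_def w_def by auto
    then obtain pw where pw: "\<Psi> w = ereal pw" and pw_le: "pw \<le> (1 - t) * pu + t * pv"
      using not_minf[of w] by (cases "\<Psi> w") (auto simp: pu pv)
    have wz: "w - z = (u - z) + t *\<^sub>R (v - u)" by (simp add: w_def algebra_simps)
    have "(norm (w - z))^2 = (norm (u - z))^2 + 2 * t * ip + t^2 * N"
      unfolding wz ip_def N_def power2_norm_eq_inner
      by (simp add: inner_add_left inner_add_right inner_commute power2_eq_square algebra_simps)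
    moreover have "pu + (norm (u - z))^2 / (2 * s) \<le> pw + (norm (w - z))^2 / (2 * s)"
      using prox[unfolded is_prox_def, rule_format, of w] by (simp add: pu pw)
    ultimately have "pu \<le> pw + (2 * t * ip + t^2 * N) / (2 * s)"
      by (simp add: add_divide_distrib)
    also have "(2 * t * ip + t^2 * N) / (2 * s) = t * (ip / s) + t * (t * (N / (2 * s)))"
      using \<open>0 < s\<close> by (simp add: field_simps power2_eq_square)
    finally have "t * (pu - pv - ip / s) \<le> t * (t * (N / (2 * s)))"
      using pw_le by (simp add: algebra_simps)
    then show ?thesis using t by (simp only: mult_le_cancel_left_pos)
  qed
  then have "pu - pv - ip / s \<le> 0" by (rule nonpos_if_le_small_multiples)
  then show ?thesis by (simp add: pu pv ip_def)
qed

lemma prox_grad_step_ineq: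
  fixes \<Psi> :: "'a::real_inner \<Rightarrow> ereal" and \<Phi> :: "'a \<Rightarrow> real"
  assumes proper: "proper_fun \<Psi>" and convex_\<Psi>: "convex_ereal_fun \<Psi>"
    and convex_\<Phi>: "convex_on UNIV \<Phi>"
    and deriv: "\<And>z. (\<Phi> has_derivative (\<lambda>h. g z \<bullet> h)) (at z)"
    and lipschitz: "\<And>u v. norm (g u - g v) \<le> L * norm (u - v)"
    and s: "0 < s" "s * L \<le> 1"
    and prox: "is_prox s \<Psi> (y - s *\<^sub>R g y) u" and v: "\<Psi> v \<noteq> \<infinity>"
  shows "real_of_ereal (\<Psi> u) + \<Phi> u \<le> real_of_ereal (\<Psi> v) + \<Phi> v
           + ((y - u) \<bullet> (u - v)) / s + (norm (y - u))^2 / (2 * s)"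
proof -
  have "real_of_ereal (\<Psi> u) \<le> real_of_ereal (\<Psi> v) + ((u - (y - s *\<^sub>R g y)) \<bullet> (v - u)) / s"
    by (rule is_prox_variational_ineq[OF proper convex_\<Psi> s(1) prox v])
  also have "((u - (y - s *\<^sub>R g y)) \<bullet> (v - u)) / s = ((y - u) \<bullet> (u - v)) / s + g y \<bullet> (v - u)"
    using s by (simp add: inner_diff_left inner_diff_right inner_add_left field_simps)
  finally have "real_of_ereal (\<Psi> u) \<le> real_of_ereal (\<Psi> v) + ((y - u) \<bullet> (u - v)) / s + g y \<bullet> (v - u)"
    by linarith
  moreover have "\<Phi> u \<le> \<Phi> y + g y \<bullet> (u - y) + L/2 * (norm (u - y))^2"
    using descent_lemma[OF convex_\<Phi> deriv lipschitz, of y "u - y"] by simp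
  moreover have "L/2 * (norm (u - y))^2 \<le> (norm (y - u))^2 / (2 * s)"
    using mult_right_mono[OF s(2), of "(norm (u - y))^2"] s(1)
    by (simp add: norm_minus_commute field_simps)
  moreover have "\<Phi> y + g y \<bullet> (v - y) \<le> \<Phi> v"
    by (rule convex_on_gradient_ineq[OF convex_\<Phi> deriv])
  moreover have "g y \<bullet> (v - u) + g y \<bullet> (u - y) = g y \<bullet> (v - y)"
    by (simp add: inner_diff_right)
  ultimately show ?thesis by linarith
qed

lemma step_ineq_combination:
  fixes u a b e :: "'a::real_inner" and \<theta> :: "'a \<Rightarrow> real"
  assumes "1 \<le> T" "0 < s"
    and step_a: "\<theta> u \<le> \<theta> a + (e \<bullet> (u - a)) / s + (norm e)^2 / (2 * s)"
    and step_b: "\<theta> u \<le> \<theta> b + (e \<bullet> (u - b)) / s + (norm e)^2 / (2 * s)"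
    and q: "q = (T - 1) *\<^sub>R (u - a) + (u - b)"
  shows "T^2 * (\<theta> u - \<theta> b) + (norm q)^2 / (2 * s)
           \<le> T * (T - 1) * (\<theta> a - \<theta> b) + (norm (q + T *\<^sub>R e))^2 / (2 * s)"
proof -
  have "(norm (q + T *\<^sub>R e))^2 = (norm q)^2 + 2 * T * (e \<bullet> q) + T^2 * (norm e)^2"
    unfolding power2_norm_eq_inner
    by (simp add: inner_add_left inner_add_right inner_commute power2_eq_square algebra_simps)
  also have "e \<bullet> q = (T - 1) * (e \<bullet> (u - a)) + e \<bullet> (u - b)"
    by (simp add: q inner_add_right)
  finally have expansion: "(norm (q + T *\<^sub>R e))^2 = (norm q)^2
      + T * (T - 1) * (2 * (e \<bullet> (u - a)) + (norm e)^2) + T * (2 * (e \<bullet> (u - b)) + (norm e)^2)"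
    by (simp add: algebra_simps power2_eq_square)
  have norm_expansion: "(norm (q + T *\<^sub>R e))^2 / (2 * s) = (norm q)^2 / (2 * s)
      + T * (T - 1) * ((e \<bullet> (u - a)) / s + (norm e)^2 / (2 * s))
      + T * ((e \<bullet> (u - b)) / s + (norm e)^2 / (2 * s))"
    unfolding expansion using \<open>0 < s\<close> by (simp add: field_simps)
  have "T * (T - 1) * \<theta> u \<le> T * (T - 1) * (\<theta> a + (e \<bullet> (u - a)) / s + (norm e)^2 / (2 * s))"
    using step_a \<open>1 \<le> T\<close> by (intro mult_left_mono) auto
  moreover have "T * \<theta> u \<le> T * (\<theta> b + (e \<bullet> (u - b)) / s + (norm e)^2 / (2 * s))"
    using step_b \<open>1 \<le> T\<close> by (intro mult_left_mono) auto
  moreover have "T^2 * c = T * (T - 1) * c + T * c" for c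
    by (simp add: power2_eq_square algebra_simps)
  ultimately show ?thesis
    unfolding norm_expansion by (simp only: distrib_left right_diff_distrib)
qed

section \<open>Lyapunov sequences\<close>

lemma summable_if_telescoping_bound:
  fixes R a :: "nat \<Rightarrow> real"
  assumes step: "\<And>k. k \<ge> m \<Longrightarrow> R (Suc k) + a k \<le> R k"
    and R_nonneg: "\<And>k. k \<ge> m \<Longrightarrow> 0 \<le> R k"
    and a_nonneg: "\<And>k. k \<ge> m \<Longrightarrow> 0 \<le> a k"
  shows "summable a"
proof -
  have partial_sums: "(\<Sum>i<n. a (i + m)) + R (n + m) \<le> R m" for n
  proof (induction n)
    case (Suc n)
    then show ?case using step[of "n + m"] by simp
  qed simp
  have "(\<Sum>i<n. a (i + m)) \<le> R m" for n
    using partial_sums[of n] R_nonneg[of "n + m"] by simp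
  then have "summable (\<lambda>i. a (i + m))"
    using a_nonneg by (intro summableI_nonneg_bounded[where x = "R m"]) auto
  then show ?thesis by (rule summable_iff_shift[THEN iffD1])
qed

text \<open>For n \<ge> 2 the block of indices n div 2 \<le> j < n has about n/2 elements, each contributing
  j G j \<ge> (n div 2) G n, so n^2 G n is bounded by eight times a tail of the convergent series.\<close>
lemma sq_mult_LIMSEQ_zero_if_summable_mult:
  fixes G :: "nat \<Rightarrow> real"
  assumes nonneg: "\<And>n. n \<ge> m \<Longrightarrow> 0 \<le> G n"
    and decreasing: "\<And>n. n \<ge> m \<Longrightarrow> G (Suc n) \<le> G n"
    and summable: "summable (\<lambda>n. real n * G n)"
  shows "(\<lambda>n. (real n)^2 * G n) \<longlonglongrightarrow> 0"
proof (rule LIMSEQ_I)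
  fix r :: real assume "0 < r"
  then obtain N where N: "\<And>i j. i \<ge> N \<Longrightarrow> norm (\<Sum>l=i..<j. real l * G l) < r / 8"
    using summable unfolding summable_Cauchy by (metis divide_pos_pos zero_less_numeral)
  have "norm ((real n)^2 * G n - 0) < r" if n: "n \<ge> 2 * (N + m) + 2" for n
  proof -
    define h where "h = n div 2"
    have h: "N \<le> h" "m \<le> h" "h \<le> n" "1 \<le> h" using n by (auto simp: h_def)
    have "0 \<le> G n" using nonneg h by simp
    have G_le: "G n \<le> G j" if "h \<le> j" "j \<le> n" for j
      using that(2)
    proof (induction rule: dec_induct)
      case (step i)
      then show ?case using decreasing[of i] \<open>m \<le> h\<close> \<open>h \<le> j\<close> by simp
    qed simp
    have "n^2 \<le> 8 * ((n - h) * h)"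
    proof (cases "even n")
      case True
      then have "n = 2 * h" by (simp add: h_def)
      then show ?thesis by (simp add: power2_eq_square)
    next
      case False
      then have "n = 2 * h + 1" by (simp add: h_def)
      then show ?thesis using \<open>1 \<le> h\<close> by (simp add: power2_eq_square algebra_simps)
    qed
    then have "(real n)^2 \<le> 8 * (real (n - h) * real h)"
      by (metis of_nat_le_iff of_nat_mult of_nat_numeral of_nat_power)
    from mult_right_mono[OF this \<open>0 \<le> G n\<close>]
    have "(real n)^2 * G n \<le> 8 * (real (n - h) * real h * G n)" by (simp only: mult.assoc)
    also have "\<dots> = 8 * (\<Sum>j=h..<n. real h * G n)" by simp
    also have "\<dots> \<le> 8 * (\<Sum>j=h..<n. real j * G j)"
      using G_le \<open>0 \<le> G n\<close> by (intro mult_left_mono sum_mono mult_mono) auto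
    also have "\<dots> < r" using N[OF \<open>N \<le> h\<close>, of n] by simp
    finally show ?thesis using \<open>0 \<le> G n\<close> by simp
  qed
  then show "\<exists>n0. \<forall>n\<ge>n0. norm ((real n)^2 * G n - 0) < r" by blast
qed

lemma weighted_kinetic_step:
  fixes \<kappa> \<alpha> w w' d d' :: real
  assumes pos: "\<kappa> + \<alpha> - 1 > 0" and "0 \<le> d'"
    and step: "w' + d' \<le> w + ((\<kappa> - 1) / (\<kappa> + \<alpha> - 1))^2 * d"
  shows "(\<kappa> + \<alpha> - 1)^2 * w' + \<kappa>^2 * d' + 2 * (\<alpha> - 1) * \<kappa> * d'
           \<le> (\<kappa> + \<alpha> - 2)^2 * w + (\<kappa> - 1)^2 * d + (2 * \<kappa> + 2 * \<alpha> - 3) * w"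
proof -
  have "(\<kappa> + \<alpha> - 1)^2 * (w' + d') \<le> (\<kappa> + \<alpha> - 1)^2 * w + (\<kappa> - 1)^2 * d"
    using mult_left_mono[OF step, of "(\<kappa> + \<alpha> - 1)^2"] pos
    by (simp add: distrib_left power_divide)
  moreover have "(\<kappa> + \<alpha> - 1)^2 * (w' + d')
      = (\<kappa> + \<alpha> - 1)^2 * w' + \<kappa>^2 * d' + 2 * (\<alpha> - 1) * \<kappa> * d' + (\<alpha> - 1)^2 * d'"
    by (simp add: power2_eq_square algebra_simps)
  moreover have "(\<kappa> + \<alpha> - 1)^2 * w = (\<kappa> + \<alpha> - 2)^2 * w + (2 * \<kappa> + 2 * \<alpha> - 3) * w"
    by (simp add: power2_eq_square algebra_simps)
  moreover have "0 \<le> (\<alpha> - 1)^2 * d'" using \<open>0 \<le> d'\<close> by simp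
  ultimately show ?thesis by linarith
qed

text \<open>R k adds M E k to the kinetic estimate multiplied by (k + \<alpha> - 1)^2; M is chosen so that the
  energy decrease pays for the growth of these weights, and R still decreases by k (w k + d k).\<close>
lemma inertial_lyapunov_LIMSEQ_zero:
  fixes w d E :: "nat \<Rightarrow> real" and \<alpha> :: real
  assumes \<alpha>: "\<alpha> > 3"
    and w_nonneg: "\<And>k. k \<ge> 2 \<Longrightarrow> 0 \<le> w k"
    and d_nonneg: "\<And>k. k \<ge> 2 \<Longrightarrow> 0 \<le> d k"
    and E_nonneg: "\<And>k. k \<ge> 2 \<Longrightarrow> 0 \<le> E k"
    and kinetic: "\<And>k. k \<ge> 2 \<Longrightarrow>
      w (Suc k) + d (Suc k) \<le> w k + ((real k - 1) / (real k + \<alpha> - 1))^2 * d k"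
    and energy: "\<And>k. k \<ge> 2 \<Longrightarrow> E (Suc k) + (\<alpha> - 3) / (\<alpha> - 1)^2 * real k * w k \<le> E k"
  shows "(\<lambda>k. (real k)^2 * (w k + d k)) \<longlonglongrightarrow> 0"
proof (rule sq_mult_LIMSEQ_zero_if_summable_mult)
  define M where "M = (2 * \<alpha> + 3) * (\<alpha> - 1)^2 / (\<alpha> - 3)"
  define R where "R k = M * E k + (real k + \<alpha> - 2)^2 * w k + (real k - 1)^2 * d k + real k * d k"
    for k
  have "M \<ge> 0" using \<alpha> by (simp add: M_def)
  have M_weight: "M * ((\<alpha> - 3) / (\<alpha> - 1)^2) = 2 * \<alpha> + 3" using \<alpha> by (simp add: M_def)
  have "R (Suc k) + real k * (w k + d k) \<le> R k" if k: "k \<ge> 2" for k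
  proof -
    have "real k \<ge> 2" using k by simp
    have "M * E (Suc k) + (M * ((\<alpha> - 3) / (\<alpha> - 1)^2)) * real k * w k \<le> M * E k"
      using mult_left_mono[OF energy[OF k] \<open>M \<ge> 0\<close>] by (simp add: algebra_simps)
    then have energy': "M * E (Suc k) + (2 * \<alpha> + 3) * real k * w k \<le> M * E k"
      by (simp only: M_weight)
    have kinetic': "(real k + \<alpha> - 1)^2 * w (Suc k) + (real k)^2 * d (Suc k)
          + 2 * (\<alpha> - 1) * real k * d (Suc k)
        \<le> (real k + \<alpha> - 2)^2 * w k + (real k - 1)^2 * d k + (2 * real k + 2 * \<alpha> - 3) * w k"
      using \<alpha> k d_nonneg[of "Suc k"] by (intro weighted_kinetic_step kinetic) auto
    have "2 * \<alpha> * 1 \<le> 2 * \<alpha> * real k" using \<alpha> k by (intro mult_left_mono) auto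
    then have "(2 * real k + 2 * \<alpha> - 3) + real k \<le> (2 * \<alpha> + 3) * real k"
      by (simp add: algebra_simps)
    from mult_right_mono[OF this w_nonneg[OF k]]
    have w_coeff: "(2 * real k + 2 * \<alpha> - 3) * w k + real k * w k \<le> (2 * \<alpha> + 3) * real k * w k"
      by (simp add: algebra_simps)
    have "2 * 2 * real k \<le> 2 * (\<alpha> - 1) * real k" using \<alpha> by (intro mult_right_mono) auto
    then have "real k + 1 \<le> 2 * (\<alpha> - 1) * real k" using \<open>real k \<ge> 2\<close> by linarith
    from mult_right_mono[OF this d_nonneg[of "Suc k"]]
    have d_coeff: "(real k + 1) * d (Suc k) \<le> 2 * (\<alpha> - 1) * real k * d (Suc k)" using k by simp
    have "R (Suc k) = M * E (Suc k) + (real k + \<alpha> - 1)^2 * w (Suc k) + (real k)^2 * d (Suc k)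
        + (real k + 1) * d (Suc k)"
      by (simp add: R_def algebra_simps)
    then show ?thesis using energy' kinetic' w_coeff d_coeff
      by (simp only: R_def[of k] distrib_left)
  qed
  moreover have "0 \<le> R k" if "k \<ge> 2" for k
    unfolding R_def using \<open>M \<ge> 0\<close> w_nonneg[OF that] d_nonneg[OF that] E_nonneg[OF that]
    by (intro add_nonneg_nonneg mult_nonneg_nonneg) auto
  moreover have sum_nonneg: "0 \<le> w k + d k" if "k \<ge> 2" for k
    using w_nonneg[OF that] d_nonneg[OF that] by simp
  ultimately show "summable (\<lambda>k. real k * (w k + d k))"
    by (intro summable_if_telescoping_bound[where m = 2 and R = R]) auto
  show "0 \<le> w k + d k" if "k \<ge> 2" for k using sum_nonneg[OF that] .
  show "w (Suc k) + d (Suc k) \<le> w k + d k" if k: "k \<ge> 2" for k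
  proof -
    have "((real k - 1) / (real k + \<alpha> - 1))^2 \<le> 1" using \<alpha> k by (intro power_le_one) auto
    from mult_right_mono[OF this d_nonneg[OF k]] show ?thesis using kinetic[OF k] by simp
  qed
qed

section \<open>The inertial forward-backward iteration\<close>

definition inertial_extrapolation :: "real \<Rightarrow> (nat \<Rightarrow> 'a::real_vector) \<Rightarrow> nat \<Rightarrow> 'a" where
  "inertial_extrapolation \<alpha> x k = x k + ((real k - 1) / (real k + \<alpha> - 1)) *\<^sub>R (x k - x (k - 1))"

definition nesterov_weight :: "real \<Rightarrow> nat \<Rightarrow> real" where
  "nesterov_weight \<alpha> k = (real k + \<alpha> - 2) / (\<alpha> - 1)"

lemma nesterov_weight_Suc_ge_1: "\<alpha> > 1 \<Longrightarrow> 1 \<le> nesterov_weight \<alpha> (Suc k)"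
  by (simp add: nesterov_weight_def field_simps)

lemma nesterov_weight_Suc: "nesterov_weight \<alpha> (Suc k) = (real k + \<alpha> - 1) / (\<alpha> - 1)"
  by (simp add: nesterov_weight_def algebra_simps)

lemma nesterov_weight_Suc_mult:
  assumes "\<alpha> > 1"
  shows "nesterov_weight \<alpha> (Suc k) * ((real k - 1) / (real k + \<alpha> - 1)) = nesterov_weight \<alpha> k - 1"
proof -
  have "real k + \<alpha> - 1 \<noteq> 0" using assms by simp
  then have "nesterov_weight \<alpha> (Suc k) * ((real k - 1) / (real k + \<alpha> - 1)) = (real k - 1) / (\<alpha> - 1)"
    by (simp add: nesterov_weight_Suc)
  also have "\<dots> = nesterov_weight \<alpha> k - 1"
    using assms by (simp add: nesterov_weight_def field_simps)
  finally show ?thesis .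
qed

lemma nesterov_weight_sq_diff_ge:
  assumes "\<alpha> > 1"
  shows "(\<alpha> - 3) / (\<alpha> - 1)^2 * real k
           \<le> (nesterov_weight \<alpha> k)^2 - nesterov_weight \<alpha> (Suc k) * (nesterov_weight \<alpha> (Suc k) - 1)"
proof -
  have "nesterov_weight \<alpha> (Suc k) - 1 = real k / (\<alpha> - 1)"
    using assms by (simp add: nesterov_weight_Suc field_simps)
  then have "nesterov_weight \<alpha> (Suc k) * (nesterov_weight \<alpha> (Suc k) - 1)
      = (real k + \<alpha> - 1) * real k / (\<alpha> - 1)^2"
    by (simp add: nesterov_weight_Suc power2_eq_square)
  moreover have "(nesterov_weight \<alpha> k)^2 = (real k + \<alpha> - 2)^2 / (\<alpha> - 1)^2"
    by (simp add: nesterov_weight_def power_divide)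
  ultimately have "(nesterov_weight \<alpha> k)^2 - nesterov_weight \<alpha> (Suc k) * (nesterov_weight \<alpha> (Suc k) - 1)
      = ((real k + \<alpha> - 2)^2 - (real k + \<alpha> - 1) * real k) / (\<alpha> - 1)^2"
    by (simp add: diff_divide_distrib)
  also have "(real k + \<alpha> - 2)^2 - (real k + \<alpha> - 1) * real k = (\<alpha> - 3) * real k + (\<alpha> - 2)^2"
    by (simp add: power2_eq_square algebra_simps)
  finally show ?thesis by (simp add: add_divide_distrib)
qed

locale inertial_forward_backward =
  fixes \<Psi> :: "'a::real_inner \<Rightarrow> ereal" and \<Phi> :: "'a \<Rightarrow> real" and g :: "'a \<Rightarrow> 'a"
    and L \<alpha> s :: real and x :: "nat \<Rightarrow> 'a" and xstar :: 'a
  assumes proper: "proper_fun \<Psi>"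
    and convex_\<Psi>: "convex_ereal_fun \<Psi>"
    and convex_\<Phi>: "convex_on UNIV \<Phi>"
    and gradient: "\<And>z. (\<Phi> has_derivative (\<lambda>h. g z \<bullet> h)) (at z)"
    and lipschitz: "\<And>u v. norm (g u - g v) \<le> L * norm (u - v)"
    and step_size: "0 < s" "s * L \<le> 1"
    and \<alpha>_gt_3: "\<alpha> > 3"
    and iteration: "\<And>k. k \<ge> 1 \<Longrightarrow> is_prox s \<Psi>
      (inertial_extrapolation \<alpha> x k - s *\<^sub>R g (inertial_extrapolation \<alpha> x k)) (x (Suc k))"
    and minimizer: "\<And>v. \<Psi> xstar + ereal (\<Phi> xstar) \<le> \<Psi> v + ereal (\<Phi> v)"
begin

abbreviation y :: "nat \<Rightarrow> 'a" where "y \<equiv> inertial_extrapolation \<alpha> x"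

text \<open>Since real_of_ereal \<infinity> = 0, \<Theta> is the objective only where \<Psi> is finite, i.e. at xstar and at
  the iterates x k for k \<ge> 2.\<close>
definition \<Theta> :: "'a \<Rightarrow> real" where "\<Theta> v = real_of_ereal (\<Psi> v) + \<Phi> v"

definition gap :: "nat \<Rightarrow> real" where "gap k = \<Theta> (x k) - \<Theta> xstar"

definition kinetic :: "nat \<Rightarrow> real" where "kinetic k = (norm (x k - x (k - 1)))^2 / (2 * s)"

definition energy :: "nat \<Rightarrow> real" where
  "energy k = (nesterov_weight \<alpha> k)^2 * gap k
     + (norm ((nesterov_weight \<alpha> k - 1) *\<^sub>R (x k - x (k - 1)) + (x k - xstar)))^2 / (2 * s)"

lemma ereal_objective: "\<Psi> v \<noteq> \<infinity> \<Longrightarrow> \<Psi> v + ereal (\<Phi> v) = ereal (\<Theta> v)"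
  using proper unfolding proper_fun_def \<Theta>_def by (cases "\<Psi> v") auto

lemma \<Psi>_iterate_finite: "k \<ge> 2 \<Longrightarrow> \<Psi> (x k) \<noteq> \<infinity>"
  using is_prox_finite[OF proper iteration[of "k - 1"]] by simp

lemma \<Psi>_minimizer_finite: "\<Psi> xstar \<noteq> \<infinity>"
proof
  assume "\<Psi> xstar = \<infinity>"
  with minimizer[of "x 2"] show False
    using ereal_objective[OF \<Psi>_iterate_finite[of 2]] by simp
qed

lemma gap_nonneg: "k \<ge> 2 \<Longrightarrow> 0 \<le> gap k"
  using minimizer[of "x k"] ereal_objective[OF \<Psi>_iterate_finite] ereal_objective[OF \<Psi>_minimizer_finite]
  by (simp add: gap_def)

lemma \<Theta>_step:
  assumes "k \<ge> 1" and "\<Psi> v \<noteq> \<infinity>"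
  shows "\<Theta> (x (Suc k)) \<le> \<Theta> v + ((y k - x (Suc k)) \<bullet> (x (Suc k) - v)) / s
           + (norm (y k - x (Suc k)))^2 / (2 * s)"
  using prox_grad_step_ineq[OF proper convex_\<Psi> convex_\<Phi> gradient lipschitz step_size
      iteration[OF assms(1)] assms(2)]
  by (simp add: \<Theta>_def)

lemma gap_kinetic_decrease:
  assumes "k \<ge> 2"
  shows "gap (Suc k) + kinetic (Suc k) \<le> gap k + ((real k - 1) / (real k + \<alpha> - 1))^2 * kinetic k"
proof -
  define a where "a = y k - x k"
  define b where "b = x (Suc k) - x k"
  have "\<Theta> (x (Suc k)) \<le> \<Theta> (x k) + ((a - b) \<bullet> b) / s + (norm (a - b))^2 / (2 * s)"
    using \<Theta>_step[of k "x k"] \<Psi>_iterate_finite assms by (simp add: a_def b_def)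
  moreover have "((a - b) \<bullet> b) / s + (norm (a - b))^2 / (2 * s) = ((norm a)^2 - (norm b)^2) / (2 * s)"
    using step_size(1) unfolding power2_norm_eq_inner
    by (simp add: inner_diff_left inner_diff_right inner_commute field_simps)
  moreover have "a = ((real k - 1) / (real k + \<alpha> - 1)) *\<^sub>R (x k - x (k - 1))"
    by (simp add: a_def inertial_extrapolation_def)
  then have "(norm a)^2 = ((real k - 1) / (real k + \<alpha> - 1))^2 * (norm (x k - x (k - 1)))^2"
    by (simp only: norm_scaleR power_mult_distrib power2_abs)
  ultimately show ?thesis
    by (simp add: gap_def kinetic_def b_def diff_divide_distrib)
qed

lemma energy_decrease:
  assumes "k \<ge> 2"
  shows "energy (Suc k) + (\<alpha> - 3) / (\<alpha> - 1)^2 * real k * gap k \<le> energy k"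
proof -
  define T where "T = nesterov_weight \<alpha> (Suc k)"
  define u where "u = x (Suc k)"
  define q where "q = (T - 1) *\<^sub>R (u - x k) + (u - xstar)"
  have "1 < \<alpha>" using \<alpha>_gt_3 by simp
  have extrapolated: "q + T *\<^sub>R (y k - u)
      = (nesterov_weight \<alpha> k - 1) *\<^sub>R (x k - x (k - 1)) + (x k - xstar)"
  proof -
    have "q + T *\<^sub>R (y k - u) = T *\<^sub>R y k - (T - 1) *\<^sub>R x k - xstar"
      by (simp add: q_def algebra_simps)
    also have "T *\<^sub>R y k = T *\<^sub>R x k + (nesterov_weight \<alpha> k - 1) *\<^sub>R (x k - x (k - 1))"
      unfolding inertial_extrapolation_def nesterov_weight_Suc_mult[OF \<open>1 < \<alpha>\<close>, symmetric]
      by (simp add: T_def algebra_simps)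
    finally show ?thesis by (simp add: algebra_simps)
  qed
  have "T^2 * gap (Suc k) + (norm q)^2 / (2 * s)
      \<le> T * (T - 1) * gap k + (norm (q + T *\<^sub>R (y k - u)))^2 / (2 * s)"
    unfolding gap_def u_def
    using assms \<Psi>_iterate_finite \<Psi>_minimizer_finite nesterov_weight_Suc_ge_1[OF \<open>1 < \<alpha>\<close>]
    by (intro step_ineq_combination[OF _ step_size(1) _ _ q_def[unfolded u_def]])
      (auto simp: T_def intro!: \<Theta>_step)
  moreover have "energy (Suc k) = T^2 * gap (Suc k) + (norm q)^2 / (2 * s)"
    by (simp add: energy_def T_def q_def u_def)
  moreover have "(\<alpha> - 3) / (\<alpha> - 1)^2 * real k * gap k
      \<le> (nesterov_weight \<alpha> k)^2 * gap k - T * (T - 1) * gap k"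
    using mult_right_mono[OF nesterov_weight_sq_diff_ge[OF \<open>1 < \<alpha>\<close>] gap_nonneg[OF assms]]
    by (simp add: T_def left_diff_distrib)
  ultimately show ?thesis
    unfolding energy_def[of k] extrapolated by linarith
qed

lemma scaled_gap_LIMSEQ_zero: "(\<lambda>k. (real k)^2 * (gap k + kinetic k)) \<longlonglongrightarrow> 0"
proof (rule inertial_lyapunov_LIMSEQ_zero[OF \<alpha>_gt_3 gap_nonneg])
  show "0 \<le> kinetic k" for k using step_size(1) by (simp add: kinetic_def)
  show "0 \<le> energy k" if "k \<ge> 2" for k
    using gap_nonneg[OF that] step_size(1) by (simp add: energy_def)
qed (use gap_kinetic_decrease energy_decrease in auto)

lemma scaled_iterates_LIMSEQ_zero:
  "(\<lambda>k. (real k)^2 * (norm (x (Suc k) - x k))^2 + (real k + 1)^2 * gap (Suc k)) \<longlonglongrightarrow> 0"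
proof (rule tendsto_sandwich[OF _ _ tendsto_const])
  have bound: "(real k)^2 * (norm (x (Suc k) - x k))^2 + (real k + 1)^2 * gap (Suc k)
      \<le> (2 * s + 1) * ((real (Suc k))^2 * (gap (Suc k) + kinetic (Suc k)))"
    and nonneg: "0 \<le> (real k)^2 * (norm (x (Suc k) - x k))^2 + (real k + 1)^2 * gap (Suc k)"
    if "k \<ge> 1" for k
  proof -
    define G K where "G = gap (Suc k)" and "K = kinetic (Suc k)"
    have "0 \<le> G" using that by (simp add: G_def gap_nonneg)
    have "0 \<le> K" using step_size(1) by (simp add: K_def kinetic_def)
    have "(norm (x (Suc k) - x k))^2 = 2 * s * K"
      using step_size(1) by (simp add: K_def kinetic_def)
    then have lhs: "(real k)^2 * (norm (x (Suc k) - x k))^2 + (real k + 1)^2 * gap (Suc k)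
        = 2 * s * K * (real k)^2 + (real k + 1)^2 * G"
      by (simp add: G_def)
    have "2 * s * K * (real k)^2 \<le> 2 * s * K * (real k + 1)^2"
      using step_size(1) \<open>0 \<le> K\<close> by (intro mult_left_mono power_mono) auto
    moreover have "0 \<le> 2 * s * (real k + 1)^2 * G" "0 \<le> (real k + 1)^2 * K"
      "0 \<le> 2 * s * K * (real k)^2" "0 \<le> (real k + 1)^2 * G"
      using step_size(1) \<open>0 \<le> G\<close> \<open>0 \<le> K\<close> by auto
    moreover have "(2 * s + 1) * ((real (Suc k))^2 * (gap (Suc k) + kinetic (Suc k)))
        = 2 * s * K * (real k + 1)^2 + 2 * s * (real k + 1)^2 * G + (real k + 1)^2 * G
          + (real k + 1)^2 * K"
      by (simp add: G_def K_def algebra_simps)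
    ultimately show "(real k)^2 * (norm (x (Suc k) - x k))^2 + (real k + 1)^2 * gap (Suc k)
        \<le> (2 * s + 1) * ((real (Suc k))^2 * (gap (Suc k) + kinetic (Suc k)))"
      and "0 \<le> (real k)^2 * (norm (x (Suc k) - x k))^2 + (real k + 1)^2 * gap (Suc k)"
      unfolding lhs by linarith+
  qed
  show "\<forall>\<^sub>F k in sequentially. 0
      \<le> (real k)^2 * (norm (x (Suc k) - x k))^2 + (real k + 1)^2 * gap (Suc k)"
    using nonneg by (rule eventually_sequentiallyI)
  show "\<forall>\<^sub>F k in sequentially. (real k)^2 * (norm (x (Suc k) - x k))^2 + (real k + 1)^2 * gap (Suc k)
      \<le> (2 * s + 1) * ((real (Suc k))^2 * (gap (Suc k) + kinetic (Suc k)))"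
    using bound by (rule eventually_sequentiallyI)
  show "(\<lambda>k. (2 * s + 1) * ((real (Suc k))^2 * (gap (Suc k) + kinetic (Suc k)))) \<longlonglongrightarrow> 0"
    using tendsto_mult_right_zero[OF LIMSEQ_Suc[OF scaled_gap_LIMSEQ_zero]] by simp
qed

theorem ereal_scaled_iterates_LIMSEQ_zero:
  "((\<lambda>k. ereal ((real k)^2 * (norm (x (Suc k) - x k))^2)
        + ereal ((real k + 1)^2) * ((\<Psi> (x (Suc k)) + ereal (\<Phi> (x (Suc k)))) - (\<Psi> xstar + ereal (\<Phi> xstar))))
    \<longlongrightarrow> ereal 0) sequentially"
proof (rule Lim_transform_eventually[OF tendsto_ereal[OF scaled_iterates_LIMSEQ_zero]])
  show "\<forall>\<^sub>F k in sequentially.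
      ereal ((real k)^2 * (norm (x (Suc k) - x k))^2 + (real k + 1)^2 * gap (Suc k))
      = ereal ((real k)^2 * (norm (x (Suc k) - x k))^2)
        + ereal ((real k + 1)^2) * ((\<Psi> (x (Suc k)) + ereal (\<Phi> (x (Suc k)))) - (\<Psi> xstar + ereal (\<Phi> xstar)))"
    using eventually_ge_at_top[of 1]
  proof eventually_elim
    case (elim k)
    then show ?case
      using ereal_objective[OF \<Psi>_iterate_finite[of "Suc k"]] ereal_objective[OF \<Psi>_minimizer_finite]
      by (simp add: gap_def)
  qed
qed

end

theorem lemma1:
  fixes \<Psi> :: "'a::{real_inner, complete_space} \<Rightarrow> ereal"
    and \<Phi> :: "'a \<Rightarrow> real"
    and grad\<Phi> :: "'a \<Rightarrow> 'a"
    and L \<alpha> s :: real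
    and x :: "nat \<Rightarrow> 'a"
    and xstar :: 'a
  assumes proper: "proper_fun \<Psi>"
    and lsc: "lsc_fun \<Psi>"
    and convPsi: "convex_ereal_fun \<Psi>"
    and convPhi: "convex_on UNIV \<Phi>"
    and grad: "\<And>z. (\<Phi> has_derivative (\<lambda>h. grad\<Phi> z \<bullet> h)) (at z)"
    and grad_cont: "continuous_on UNIV grad\<Phi>"
    and L_pos: "L > 0"
    and lip: "\<And>u v. norm (grad\<Phi> u - grad\<Phi> v) \<le> L * norm (u - v)"
    and argmin_ne: "\<exists>z. \<forall>w. \<Psi> z + ereal (\<Phi> z) \<le> \<Psi> w + ereal (\<Phi> w)"
    and alpha: "\<alpha> > 3"
    and s_pos: "0 < s" and s_lt: "s < 1 / L"
    and iter: "\<And>k. k \<ge> 1 \<Longrightarrow>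
       is_prox s \<Psi>
         ((x k + ((real k - 1) / (real k + \<alpha> - 1)) *\<^sub>R (x k - x (k - 1)))
           - s *\<^sub>R grad\<Phi> (x k + ((real k - 1) / (real k + \<alpha> - 1)) *\<^sub>R (x k - x (k - 1))))
         (x (Suc k))"
    and xstar: "\<forall>w. \<Psi> xstar + ereal (\<Phi> xstar) \<le> \<Psi> w + ereal (\<Phi> w)"
  shows "\<exists>l::real.
     ((\<lambda>k. ereal ((real k)^2 * (norm (x (Suc k) - x k))^2)
            + ereal ((real k + 1)^2)
              * ((\<Psi> (x (Suc k)) + ereal (\<Phi> (x (Suc k)))) - (\<Psi> xstar + ereal (\<Phi> xstar))))
      \<longlongrightarrow> ereal l) sequentially"
proof -
  interpret inertial_forward_backward \<Psi> \<Phi> grad\<Phi> L \<alpha> s x xstar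
  proof
    show "s * L \<le> 1" using s_lt L_pos by (simp add: field_simps)
  qed (use proper convPsi convPhi grad lip s_pos alpha iter xstar in
      \<open>auto simp: inertial_extrapolation_def\<close>)
  show ?thesis using ereal_scaled_iterates_LIMSEQ_zero by blast
qed

end
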